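(* Let $T \in \mathbb{R}^{n_1} \otimes \mathbb{R}^{n_2} \otimes \mathbb{R}^{n_3}$ and let $v \in \mathbb{R}^{n_1} \otimes \mathbb{R}^{n_2} \otimes \mathbb{R}^{n_3}$ be a rank-one tensor. Then $Q(T + v) \geq Q(T) - 1$.
   Context: A rank-one tensor is a nonzero tensor of the form $v_1 \otimes v_2 \otimes v_3$. For $r \geq 0$ let $I_r := \sum_{j=1}^r e_j \otimes e_j \otimes e_j$. The subrank of $T$ is $Q(T) := \max\{ r \mid \exists\ \mathbb{R}\text{-linear } \varphi_i : \mathbb{R}^{n_i} \to \mathbb{R}^r,\ (\varphi_1 \otimes \varphi_2 \otimes \varphi_3) T = I_r\}$. *)

theory Defs
  imports Complex_Main
begin

text \<open>A tensor in R^n1 (x) R^n2 (x) R^n3 is represented by its coordinate array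
  T :: nat => nat => nat => real, of which only the entries T i j k with
  i < n1, j < n2, k < n3 are relevant.  A linear map R^n -> R^r is represented by
  its r x n matrix A :: nat => nat => real (entries A a i with a < r, i < n).\<close>

type_synonym tensor3 = "nat \<Rightarrow> nat \<Rightarrow> nat \<Rightarrow> real"

definition tensor_add :: "tensor3 \<Rightarrow> tensor3 \<Rightarrow> tensor3" where
  "tensor_add T S = (\<lambda>i j k. T i j k + S i j k)"

definition apply_maps ::
  "nat \<Rightarrow> nat \<Rightarrow> nat \<Rightarrow> (nat \<Rightarrow> nat \<Rightarrow> real) \<Rightarrow> (nat \<Rightarrow> nat \<Rightarrow> real) \<Rightarrow> (nat \<Rightarrow> nat \<Rightarrow> real)
     \<Rightarrow> tensor3 \<Rightarrow> tensor3" where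
  "apply_maps n1 n2 n3 A B C T = (\<lambda>a b c.
     \<Sum>i<n1. \<Sum>j<n2. \<Sum>k<n3. A a i * B b j * C c k * T i j k)"

definition unit_tensor :: "tensor3" where
  "unit_tensor = (\<lambda>a b c. if a = b \<and> b = c then 1 else 0)"

definition restricts_to_unit :: "nat \<Rightarrow> nat \<Rightarrow> nat \<Rightarrow> tensor3 \<Rightarrow> nat \<Rightarrow> bool" where
  "restricts_to_unit n1 n2 n3 T r \<longleftrightarrow>
     (\<exists>A B C. \<forall>a<r. \<forall>b<r. \<forall>c<r. apply_maps n1 n2 n3 A B C T a b c = unit_tensor a b c)"

definition subrank :: "nat \<Rightarrow> nat \<Rightarrow> nat \<Rightarrow> tensor3 \<Rightarrow> nat" where
  "subrank n1 n2 n3 T = Max {r. restricts_to_unit n1 n2 n3 T r}"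

definition rank_one :: "nat \<Rightarrow> nat \<Rightarrow> nat \<Rightarrow> tensor3 \<Rightarrow> bool" where
  "rank_one n1 n2 n3 v \<longleftrightarrow>
     (\<exists>u1 u2 u3 :: nat \<Rightarrow> real.
        (\<forall>i<n1. \<forall>j<n2. \<forall>k<n3. v i j k = u1 i * u2 j * u3 k)) \<and>
     (\<exists>i<n1. \<exists>j<n2. \<exists>k<n3. v i j k \<noteq> 0)"

end

theory Submission
  imports Defs "Jordan_Normal_Form.Determinant"
begin

text \<open>Choose maps restricting T to I_r. The same maps send T + v to I_r + x (x) y (x) z with
  x, y, z the images of the factors of v. Pick a pivot index p with x_p \<noteq> 0 (any p if x = 0),
  discard the p-th output coordinate and, for each remaining a, subtract x_a / x_p times the p-th
  row of the first map from its a-th row. This kills the rank-one term, and leaves the unit tensor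
  intact because its slice p vanishes at all remaining indices; what is left is I_(r-1).
  Finiteness of the subrank comes from r \<le> n1: contracting a restriction to I_r over the last
  two factors factors the r \<times> r identity through R^n1.\<close>

lemma apply_maps_tensor_add:
  "apply_maps n1 n2 n3 A B C (tensor_add T S) a b c
     = apply_maps n1 n2 n3 A B C T a b c + apply_maps n1 n2 n3 A B C S a b c"
  by (simp add: apply_maps_def tensor_add_def algebra_simps sum.distrib)

lemma apply_maps_rank_one:
  assumes "\<forall>i<n1. \<forall>j<n2. \<forall>k<n3. v i j k = u1 i * u2 j * u3 k"
  shows "apply_maps n1 n2 n3 A B C v a b c
           = (\<Sum>i<n1. A a i * u1 i) * (\<Sum>j<n2. B b j * u2 j) * (\<Sum>k<n3. C c k * u3 k)"
proof -
  have "apply_maps n1 n2 n3 A B C v a b c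
          = (\<Sum>i<n1. \<Sum>j<n2. \<Sum>k<n3. (A a i * u1 i) * (B b j * u2 j) * (C c k * u3 k))"
    unfolding apply_maps_def using assms by (intro sum.cong refl) (simp add: ac_simps)
  also have "\<dots> = (\<Sum>i<n1. A a i * u1 i) * (\<Sum>j<n2. B b j * u2 j) * (\<Sum>k<n3. C c k * u3 k)"
    by (simp add: sum_distrib_left[symmetric] sum_distrib_right[symmetric])
  finally show ?thesis .
qed

lemma apply_maps_row_operation:
  "apply_maps n1 n2 n3 (\<lambda>a i. A (f a) i - t a * A p i) (\<lambda>b. B (g b)) (\<lambda>c. C (h c)) T a b c
     = apply_maps n1 n2 n3 A B C T (f a) (g b) (h c) - t a * apply_maps n1 n2 n3 A B C T p (g b) (h c)"
  by (simp add: apply_maps_def algebra_simps sum_subtractf sum_distrib_left)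

lemma right_inverse_dim_le:
  fixes P Q :: "nat \<Rightarrow> nat \<Rightarrow> real"
  assumes inverse: "\<And>a b. a < r \<Longrightarrow> b < r \<Longrightarrow> (\<Sum>i<n. P a i * Q i b) = (if a = b then 1 else 0)"
  shows "r \<le> n"
proof (rule ccontr)
  assume "\<not> r \<le> n"
  then have "n < r" by simp
  define P' where "P' = mat r r (\<lambda>(a, i). if i < n then P a i else 0)"
  define Q' where "Q' = mat r r (\<lambda>(i, b). if i < n then Q i b else 0)"
  have P': "P' \<in> carrier_mat r r" and Q': "Q' \<in> carrier_mat r r"
    by (simp_all add: P'_def Q'_def)
  have "P' * Q' = 1\<^sub>m r"
  proof (rule eq_matI)
    fix a b assume a: "a < dim_row (1\<^sub>m r)" and b: "b < dim_col (1\<^sub>m r)"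
    have "(P' * Q') $$ (a, b)
            = (\<Sum>i\<in>{0..<r}. (if i < n then P a i else 0) * (if i < n then Q i b else 0))"
      using a b by (simp add: P'_def Q'_def scalar_prod_def)
    also have "\<dots> = (\<Sum>i<n. P a i * Q i b)"
      using \<open>n < r\<close> by (subst lessThan_atLeast0, intro sum.mono_neutral_cong_right) auto
    also have "\<dots> = 1\<^sub>m r $$ (a, b)"
      using inverse a b by simp
    finally show "(P' * Q') $$ (a, b) = 1\<^sub>m r $$ (a, b)" .
  qed (simp_all add: P'_def Q'_def)
  moreover have "det Q' = 0"
  proof -
    \<comment> \<open>row n of Q' is zero, so scaling it by 0 does not change Q'\<close>
    have "multrow n 0 Q' = Q'"
      by (rule eq_matI) (auto simp: Q'_def)
    then show ?thesis
      using det_multrow[OF \<open>n < r\<close> Q', of 0] by simp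
  qed
  ultimately show False
    using det_mult[OF P' Q'] by simp
qed

lemma restricts_to_unit_le_dim:
  assumes "restricts_to_unit n1 n2 n3 T r"
  shows "r \<le> n1"
proof -
  obtain A B C where unit:
    "\<forall>a<r. \<forall>b<r. \<forall>c<r. apply_maps n1 n2 n3 A B C T a b c = unit_tensor a b c"
    using assms unfolding restricts_to_unit_def by blast
  define Q where "Q = (\<lambda>i b. \<Sum>j<n2. \<Sum>k<n3. B b j * C b k * T i j k)"
  have "(\<Sum>i<n1. A a i * Q i b) = (if a = b then 1 else 0)" if "a < r" "b < r" for a b
  proof -
    have "(\<Sum>i<n1. A a i * Q i b) = apply_maps n1 n2 n3 A B C T a b b"
      by (simp add: Q_def apply_maps_def sum_distrib_left mult.assoc)
    then show ?thesis
      using unit that by (simp add: unit_tensor_def)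
  qed
  then show ?thesis
    by (rule right_inverse_dim_le)
qed

lemma finite_restricts_to_unit: "finite {r. restricts_to_unit n1 n2 n3 T r}"
  by (rule finite_subset[of _ "{..n1}"]) (auto dest: restricts_to_unit_le_dim)

lemma restricts_to_unit_subrank: "restricts_to_unit n1 n2 n3 T (subrank n1 n2 n3 T)"
proof -
  have "restricts_to_unit n1 n2 n3 T 0"
    unfolding restricts_to_unit_def by simp
  then show ?thesis
    unfolding subrank_def using Max_in[OF finite_restricts_to_unit[of n1 n2 n3 T]] by auto
qed

lemma le_subrank: "restricts_to_unit n1 n2 n3 T r \<Longrightarrow> r \<le> subrank n1 n2 n3 T"
  unfolding subrank_def using Max_ge[OF finite_restricts_to_unit[of n1 n2 n3 T]] by auto

lemma restricts_to_unit_add_rank_one: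
  assumes "restricts_to_unit n1 n2 n3 T (Suc m)"
    and v: "\<forall>i<n1. \<forall>j<n2. \<forall>k<n3. v i j k = u1 i * u2 j * u3 k"
  shows "restricts_to_unit n1 n2 n3 (tensor_add T v) m"
proof -
  obtain A B C where unit:
    "\<forall>a<Suc m. \<forall>b<Suc m. \<forall>c<Suc m. apply_maps n1 n2 n3 A B C T a b c = unit_tensor a b c"
    using assms(1) unfolding restricts_to_unit_def by blast
  define x where "x = (\<lambda>a. \<Sum>i<n1. A a i * u1 i)"
  have image: "apply_maps n1 n2 n3 A B C (tensor_add T v) a b c
      = apply_maps n1 n2 n3 A B C T a b c
        + x a * (\<Sum>j<n2. B b j * u2 j) * (\<Sum>k<n3. C c k * u3 k)" for a b c
    unfolding apply_maps_tensor_add apply_maps_rank_one[OF v] x_def ..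
  obtain p where "p < Suc m" and pivot: "\<And>q. q < Suc m \<Longrightarrow> x p = 0 \<Longrightarrow> x q = 0"
    by (cases "\<exists>q<Suc m. x q \<noteq> 0") auto
  define skip where "skip = (\<lambda>a. if a < p then a else Suc a)"
  have skip: "skip a < Suc m" "skip a \<noteq> p" if "a < m" for a
    using that \<open>p < Suc m\<close> by (auto simp: skip_def)
  have skip_eq_iff: "skip a = skip b \<longleftrightarrow> a = b" for a b
    by (auto simp: skip_def)
  define t where "t = (\<lambda>a. if x p = 0 then 0 else x (skip a) / x p)"
  have eliminated: "x (skip a) - t a * x p = 0" if "a < m" for a
    using pivot[OF skip(1)[OF that]] by (auto simp: t_def)
  have "apply_maps n1 n2 n3 (\<lambda>a i. A (skip a) i - t a * A p i) (\<lambda>b. B (skip b)) (\<lambda>c. C (skip c))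
          (tensor_add T v) a b c = unit_tensor a b c"
    if "a < m" "b < m" "c < m" for a b c
    unfolding apply_maps_row_operation image
    using that unit skip[OF that(1)] skip[OF that(2)] skip[OF that(3)] \<open>p < Suc m\<close>
      eliminated[OF that(1)]
    by (simp add: unit_tensor_def skip_eq_iff algebra_simps)
  then show ?thesis
    unfolding restricts_to_unit_def by blast
qed

theorem lemma3p1:
  fixes n1 n2 n3 :: nat and T v :: tensor3
  assumes "rank_one n1 n2 n3 v"
  shows "int (subrank n1 n2 n3 (tensor_add T v)) \<ge> int (subrank n1 n2 n3 T) - 1"
proof (cases "subrank n1 n2 n3 T")
  case 0
  then show ?thesis by simp
next
  case (Suc m)
  obtain u1 u2 u3 :: "nat \<Rightarrow> real"
    where "\<forall>i<n1. \<forall>j<n2. \<forall>k<n3. v i j k = u1 i * u2 j * u3 k"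
    using assms unfolding rank_one_def by blast
  then have "restricts_to_unit n1 n2 n3 (tensor_add T v) m"
    using restricts_to_unit_add_rank_one restricts_to_unit_subrank[of n1 n2 n3 T] Suc by metis
  then show ?thesis
    using le_subrank Suc by fastforce
qed

end
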